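(* Assume only the weight regularity condition (so $\mathbb E[W^2]<\infty$). Then \[ \lim_{\beta\nearrow\beta_c}\widetilde\chi(\beta,0^+)(\beta_c-\beta)=\frac{\mathbb E[W]^2}{\mathbb E[W^2]}\tanh(\beta_c), \] so in particular $\boldsymbol\gamma=1$.
   Context: Weights $w_i>0$, $W_N=w_{U_N}$, $U_N$ uniform on $[N]$. Weight regularity: $W_N\to W$ in distribution, $\mathbb E[W_N^2]\to\mathbb E[W^2]<\infty$, $\mathbb E[W]>0$. $\nu=\mathbb E[W^2]/\mathbb E[W]$, $\beta_c={\rm asinh}(1/\nu)$, $\alpha(\beta)=\sqrt{\sinh(\beta)/\mathbb E[W]}$. For $B>0$, $z^*(\beta,B)$ is the unique positive solution of $z=\mathbb E[\tanh(\alpha(\beta)Wz+B)\alpha(\beta)W]$ (for $\beta<\beta_c$, $z^*(\beta,B)\to0$ as $B\searrow0$), $\widetilde M(\beta,B)=\mathbb E[\tanh(\alpha(\beta)Wz^*+B)]$ is the limiting annealed magnetization of the Ising model on the generalized random graph, $\widetilde\chi(\beta,B)=\partial_B\widetilde M(\beta,B)$ the limiting annealed susceptibility, and $\widetilde\chi(\beta,0^+)=\lim_{B\searrow0}\widetilde\chi(\beta,B)$. The critical exponent $\boldsymbol\gamma$ is defined by $\widetilde\chi(\beta,0^+)\asymp(\beta_c-\beta)^{-\boldsymbol\gamma}$ as $\beta\nearrow\beta_c$. *)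

theory Defs
  imports "HOL-Probability.Probability"
begin

text \<open>The limiting weight W is a real random variable W on a probability space M.
  All limiting quantities depend only on the law of W.\<close>

definition nu :: "'a measure \<Rightarrow> ('a \<Rightarrow> real) \<Rightarrow> real" where
  "nu M W = (\<integral>x. (W x)^2 \<partial>M) / (\<integral>x. W x \<partial>M)"

definition beta_c :: "'a measure \<Rightarrow> ('a \<Rightarrow> real) \<Rightarrow> real" where
  "beta_c M W = arsinh (1 / nu M W)"

definition alpha :: "'a measure \<Rightarrow> ('a \<Rightarrow> real) \<Rightarrow> real \<Rightarrow> real" where
  "alpha M W \<beta> = sqrt (sinh \<beta> / (\<integral>x. W x \<partial>M))"

definition zstar :: "'a measure \<Rightarrow> ('a \<Rightarrow> real) \<Rightarrow> real \<Rightarrow> real \<Rightarrow> real" where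
  "zstar M W \<beta> B = (THE z. z > 0 \<and>
      z = (\<integral>x. tanh (alpha M W \<beta> * W x * z + B) * (alpha M W \<beta> * W x) \<partial>M))"

definition Mtilde :: "'a measure \<Rightarrow> ('a \<Rightarrow> real) \<Rightarrow> real \<Rightarrow> real \<Rightarrow> real" where
  "Mtilde M W \<beta> B = (\<integral>x. tanh (alpha M W \<beta> * W x * zstar M W \<beta> B + B) \<partial>M)"

definition chi :: "'a measure \<Rightarrow> ('a \<Rightarrow> real) \<Rightarrow> real \<Rightarrow> real \<Rightarrow> real" where
  "chi M W \<beta> B = deriv (\<lambda>b. Mtilde M W \<beta> b) B"

definition chi0 :: "'a measure \<Rightarrow> ('a \<Rightarrow> real) \<Rightarrow> real \<Rightarrow> real" where
  "chi0 M W \<beta> = Lim (at_right 0) (chi M W \<beta>)"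

end

theory Submission
  imports Defs
begin

text \<open>For \<open>\<beta> < \<beta>\<^sub>c\<close> the rescaled weight \<open>w = \<alpha>(\<beta>) W\<close> has
  \<open>E[w\<^sup>2] = sinh \<beta> E[W\<^sup>2] / E[W] < 1\<close>, so \<open>z \<mapsto> E[tanh (w z + B) w]\<close> is a contraction and its
  positive fixed point \<open>z\<^sup>*(B)\<close> is Lipschitz in \<open>B\<close> and vanishes as \<open>B \<searrow> 0\<close>. Linearising
  \<open>tanh\<close> at \<open>w z\<^sup>* + B\<close>, with an error that dominated convergence controls using only
  \<open>E[W\<^sup>2] < \<infinity>\<close>, gives
  \<open>\<chi>(\<beta>,B) = E[sech\<^sup>2] + E[w sech\<^sup>2]\<^sup>2 / (1 - E[w\<^sup>2 sech\<^sup>2])\<close>, which tends to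
  \<open>1 + E[w]\<^sup>2 / (1 - E[w\<^sup>2]) = 1 + sinh \<beta> E[W] / (1 - sinh \<beta> / sinh \<beta>\<^sub>c)\<close> as \<open>B \<searrow> 0\<close>.
  The pole at \<open>\<beta>\<^sub>c\<close> is simple with residue governed by
  \<open>(sinh \<beta>\<^sub>c - sinh \<beta>) / (\<beta>\<^sub>c - \<beta>) \<rightarrow> cosh \<beta>\<^sub>c\<close>.\<close>

definition sech2 :: "real \<Rightarrow> real" where
  "sech2 t = 1 - tanh t ^ 2"

lemma abs_tanh_real_less_1: "\<bar>tanh (x::real)\<bar> < 1"
  using tanh_real_bounds[of x] by auto

lemma sech2_nonneg: "0 \<le> sech2 t" and sech2_le_1: "sech2 t \<le> 1"
  using abs_tanh_real_less_1[of t] by (auto simp: sech2_def abs_square_le_1)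

lemma tanh_real_has_derivative: "(tanh has_real_derivative sech2 x) (at (x::real))"
  using has_field_derivative_tanh[OF _ DERIV_ident, of x UNIV]
  by (simp add: sech2_def order.strict_implies_not_eq[OF cosh_real_pos, symmetric])

lemma abs_tanh_diff_le: "\<bar>tanh y - tanh x\<bar> \<le> \<bar>y - (x::real)\<bar>"
proof -
  have *: "\<bar>tanh b - tanh a\<bar> \<le> b - a" if ab: "a < b" for a b :: real
  proof -
    obtain z where "tanh b - tanh a = (b - a) * sech2 z"
      using MVT2[OF ab, of tanh sech2] tanh_real_has_derivative by blast
    then show ?thesis
      using ab sech2_nonneg[of z] sech2_le_1[of z] by (simp add: abs_mult mult_le_cancel_left1)
  qed
  show ?thesis
    using *[of x y] *[of y x] by (cases x y rule: linorder_cases) (auto simp: abs_minus_commute)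
qed

lemma abs_tanh_le: "\<bar>tanh (x::real)\<bar> \<le> \<bar>x\<bar>"
  using abs_tanh_diff_le[of x 0] by simp

lemma tanh_square_le: "tanh (t::real) ^ 2 \<le> min 1 \<bar>t\<bar>"
proof -
  have le1: "\<bar>tanh t\<bar> \<le> 1" using abs_tanh_real_less_1[of t] by simp
  have "tanh t ^ 2 = \<bar>tanh t\<bar> * \<bar>tanh t\<bar>" by (simp add: power2_eq_square abs_mult_self_eq)
  also have "\<dots> \<le> \<bar>tanh t\<bar>" using mult_left_le[OF le1 abs_ge_zero[of "tanh t"]] .
  finally show ?thesis using le1 abs_tanh_le[of t] by simp
qed

lemma tanh_linearization_error:
  "\<bar>tanh y - tanh x - sech2 x * (y - x)\<bar> \<le> 2 * \<bar>y - x\<bar> * min 1 \<bar>y - (x::real)\<bar>"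
proof -
  define g where "g t = tanh t - sech2 x * t" for t
  have g_diff: "\<bar>g b - g a\<bar> \<le> (b - a) * (2 * max \<bar>a - x\<bar> \<bar>b - x\<bar>)" if ab: "a < b" for a b
  proof -
    have "(g has_real_derivative sech2 t - sech2 x) (at t)" for t
      unfolding g_def by (rule derivative_eq_intros tanh_real_has_derivative refl | simp)+
    then obtain z where z: "a < z" "z < b" "g b - g a = (b - a) * (sech2 z - sech2 x)"
      using MVT2[OF ab, of g "\<lambda>t. sech2 t - sech2 x"] by blast
    have "\<bar>sech2 z - sech2 x\<bar> = \<bar>tanh x - tanh z\<bar> * \<bar>tanh x + tanh z\<bar>"
      by (simp add: sech2_def power2_eq_square algebra_simps abs_mult[symmetric])
    also have "\<dots> \<le> \<bar>x - z\<bar> * 2"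
      using abs_tanh_diff_le[of x z] abs_tanh_real_less_1[of x] abs_tanh_real_less_1[of z]
      by (intro mult_mono) auto
    also have "\<bar>x - z\<bar> \<le> max \<bar>a - x\<bar> \<bar>b - x\<bar>" using z by auto
    finally have bound: "\<bar>sech2 z - sech2 x\<bar> \<le> 2 * max \<bar>a - x\<bar> \<bar>b - x\<bar>" by simp
    have "\<bar>g b - g a\<bar> = (b - a) * \<bar>sech2 z - sech2 x\<bar>" using z ab by (simp add: abs_mult)
    also have "\<dots> \<le> (b - a) * (2 * max \<bar>a - x\<bar> \<bar>b - x\<bar>)"
      by (rule mult_left_mono[OF bound]) (use ab in auto)
    finally show ?thesis .
  qed
  have eq: "tanh y - tanh x - sech2 x * (y - x) = g y - g x" by (simp add: g_def algebra_simps)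
  have quadratic: "\<bar>g y - g x\<bar> \<le> 2 * \<bar>y - x\<bar> * \<bar>y - x\<bar>"
    using g_diff[of x y] g_diff[of y x]
    by (cases x y rule: linorder_cases) (auto simp: abs_minus_commute algebra_simps)
  have linear: "\<bar>g y - g x\<bar> \<le> 2 * \<bar>y - x\<bar>"
  proof -
    have "\<bar>g y - g x\<bar> \<le> \<bar>tanh y - tanh x\<bar> + \<bar>sech2 x * (y - x)\<bar>"
      unfolding g_def by (simp add: algebra_simps)
    also have "\<bar>sech2 x * (y - x)\<bar> \<le> \<bar>y - x\<bar>"
      using sech2_nonneg[of x] sech2_le_1[of x] by (simp add: abs_mult mult_left_le_one_le)
    finally show ?thesis using abs_tanh_diff_le[of y x] by simp
  qed
  show ?thesis
    unfolding eq using quadratic linear by (cases "\<bar>y - x\<bar> \<le> 1") (auto simp: min_def)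
qed

lemma weighted_tanh_linearization_error:
  fixes c w u v d :: real
  assumes "0 \<le> c" "c \<le> w + 1" "0 \<le> d" "\<bar>v - u\<bar> \<le> (w + 1) * d"
  shows "c * \<bar>tanh v - tanh u - sech2 u * (v - u)\<bar> \<le> 2 * d * ((w + 1)^2 * min 1 ((w + 1) * d))"
proof -
  define K where "K = 2 * d * min 1 ((w + 1) * d)"
  have K_nonneg: "0 \<le> K" using assms by (simp add: K_def)
  have "\<bar>tanh v - tanh u - sech2 u * (v - u)\<bar> \<le> 2 * \<bar>v - u\<bar> * min 1 \<bar>v - u\<bar>"
    by (rule tanh_linearization_error)
  also have "\<dots> \<le> 2 * ((w + 1) * d) * min 1 ((w + 1) * d)"
    using assms by (intro mult_mono) auto
  finally have "\<bar>tanh v - tanh u - sech2 u * (v - u)\<bar> \<le> (w + 1) * K"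
    by (simp add: K_def algebra_simps)
  then have "c * \<bar>tanh v - tanh u - sech2 u * (v - u)\<bar> \<le> (w + 1) * ((w + 1) * K)"
    using assms K_nonneg by (intro mult_mono) auto
  then show ?thesis by (simp add: K_def power2_eq_square algebra_simps)
qed

lemma borel_measurable_tanh [measurable]:
  "f \<in> borel_measurable M \<Longrightarrow> (\<lambda>x. tanh (f x :: real)) \<in> borel_measurable M"
  by (rule measurable_compose[OF _ borel_measurable_continuous_onI]) (auto intro!: continuous_intros)

lemma borel_measurable_sech2 [measurable]:
  "f \<in> borel_measurable M \<Longrightarrow> (\<lambda>x. sech2 (f x)) \<in> borel_measurable M"
  unfolding sech2_def by measurable

lemma integrable_dominated:
  fixes f g :: "'a \<Rightarrow> real"
  assumes "f \<in> borel_measurable M" "integrable M g" "AE x in M. \<bar>f x\<bar> \<le> g x"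
  shows "integrable M f"
  by (rule Bochner_Integration.integrable_bound[OF assms(2,1)]) (use assms(3) in auto)

lemma abs_integral_le_AE:
  fixes f g :: "'a \<Rightarrow> real"
  assumes "f \<in> borel_measurable M" "integrable M g" "AE x in M. \<bar>f x\<bar> \<le> g x"
  shows "\<bar>\<integral>x. f x \<partial>M\<bar> \<le> (\<integral>x. g x \<partial>M)"
proof -
  have "\<bar>\<integral>x. f x \<partial>M\<bar> \<le> (\<integral>x. \<bar>f x\<bar> \<partial>M)"
    using Bochner_Integration.integral_norm_bound[of M f] by simp
  also have "\<dots> \<le> (\<integral>x. g x \<partial>M)"
    by (rule integral_mono_AE) (use integrable_dominated[OF assms] assms in auto)
  finally show ?thesis .
qed

locale contractive_weight = prob_space M for M :: "'a measure" +
  fixes w :: "'a \<Rightarrow> real"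
  assumes borel_measurable_w [measurable]: "w \<in> borel_measurable M"
    and w_nonneg: "AE x in M. 0 \<le> w x"
    and integrable_w_square: "integrable M (\<lambda>x. (w x)^2)"
    and mean_pos: "0 < (\<integral>x. w x \<partial>M)"
    and second_moment_less_1: "(\<integral>x. (w x)^2 \<partial>M) < 1"
begin

abbreviation "E1 \<equiv> \<integral>x. w x \<partial>M"
abbreviation "E2 \<equiv> \<integral>x. (w x)^2 \<partial>M"

lemma integrable_w [simp]: "integrable M w"
  by (rule square_integrable_imp_integrable[OF borel_measurable_w integrable_w_square])

lemma integrable_w_plus_1_square: "integrable M (\<lambda>x. (w x + 1)^2)"
proof -
  have "integrable M (\<lambda>x. (w x)^2 + 2 * w x + 1)"
    using integrable_w_square by (intro Bochner_Integration.integrable_add) auto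
  then show ?thesis by (simp add: power2_eq_square algebra_simps)
qed

lemma abs_power_le_w_plus_1_square: "k \<le> 2 \<Longrightarrow> AE x in M. \<bar>w x ^ k\<bar> \<le> (w x + 1)^2"
  using w_nonneg
proof eventually_elim
  case (elim x)
  assume "k \<le> 2"
  then consider "k = 0" | "k = 1" | "k = 2" by linarith
  then show ?case using elim by cases (auto simp: power2_eq_square algebra_simps)
qed

lemma integrable_w_power: "k \<le> 2 \<Longrightarrow> integrable M (\<lambda>x. w x ^ k)"
  by (rule integrable_dominated[OF _ integrable_w_plus_1_square abs_power_le_w_plus_1_square]) auto

lemma second_moment_nonneg: "0 \<le> E2"
  by (rule integral_nonneg_AE) auto

text \<open>A modulus for the error of linearising \<open>tanh (w z + B)\<close> under perturbations of size
  \<open>d\<close> in \<open>z\<close> and \<open>B\<close>; it vanishes as \<open>d \<searrow> 0\<close> because \<open>E[(w + 1)\<^sup>2] < \<infinity>\<close>.\<close>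
definition lin_modulus :: "real \<Rightarrow> real" where
  "lin_modulus d = (\<integral>x. (w x + 1)^2 * min 1 ((w x + 1) * d) \<partial>M)"

lemma integrable_lin_modulus_integrand:
  "0 \<le> d \<Longrightarrow> integrable M (\<lambda>x. (w x + 1)^2 * min 1 ((w x + 1) * d))"
  by (rule integrable_dominated[OF _ integrable_w_plus_1_square])
    (use w_nonneg in \<open>auto simp: abs_mult\<close>)

lemma lin_modulus_nonneg: "0 \<le> d \<Longrightarrow> 0 \<le> lin_modulus d"
  unfolding lin_modulus_def by (rule integral_nonneg_AE) (use w_nonneg in auto)

lemma lin_modulus_mono:
  assumes "0 \<le> d" "d \<le> d'"
  shows "lin_modulus d \<le> lin_modulus d'"
  unfolding lin_modulus_def
proof (rule integral_mono_AE[OF integrable_lin_modulus_integrand integrable_lin_modulus_integrand])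
  show "AE x in M. (w x + 1)^2 * min 1 ((w x + 1) * d) \<le> (w x + 1)^2 * min 1 ((w x + 1) * d')"
    using w_nonneg
  proof eventually_elim
    case (elim x)
    have "min 1 ((w x + 1) * d) \<le> min 1 ((w x + 1) * d')"
      by (rule min.mono) (use elim assms in \<open>auto intro: mult_left_mono\<close>)
    then show ?case by (rule mult_left_mono) simp
  qed
qed (use assms in auto)

lemma lin_modulus_tendsto_0: "(lin_modulus \<longlongrightarrow> 0) (at_right 0)"
proof -
  let ?s = "\<lambda>t x. (w x + 1)^2 * min 1 ((w x + 1) * inverse t)"
  have "((\<lambda>t. integral\<^sup>L M (?s t)) \<longlongrightarrow> integral\<^sup>L M (\<lambda>x. 0)) at_top"
  proof (rule integral_dominated_convergence_at_top[where w = "\<lambda>x. (w x + 1)^2"])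
    show "AE x in M. ((\<lambda>t. ?s t x) \<longlongrightarrow> 0) at_top"
    proof (rule AE_I2)
      fix x
      have "((\<lambda>t. ?s t x) \<longlongrightarrow> (w x + 1)^2 * min 1 ((w x + 1) * 0)) at_top"
        by (intro tendsto_intros tendsto_inverse_0_at_top filterlim_ident)
      then show "((\<lambda>t. ?s t x) \<longlongrightarrow> 0) at_top" by simp
    qed
    show "\<forall>\<^sub>F t in at_top. AE x in M. norm (?s t x) \<le> (w x + 1)^2"
    proof (rule eventually_mono[OF eventually_gt_at_top[of 0]])
      fix t :: real assume "0 < t"
      show "AE x in M. norm (?s t x) \<le> (w x + 1)^2"
        using w_nonneg by eventually_elim (use \<open>0 < t\<close> in \<open>auto simp: abs_mult\<close>)
    qed
  qed (auto intro: integrable_w_plus_1_square)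
  then show ?thesis
    unfolding filterlim_at_right_to_top lin_modulus_def by simp
qed

lemma lin_modulus_tendsto_0_compose:
  assumes "(g \<longlongrightarrow> 0) F" "\<forall>\<^sub>F x in F. 0 < g x"
  shows "((\<lambda>x. lin_modulus (g x)) \<longlongrightarrow> 0) F"
  using filterlim_compose[OF lin_modulus_tendsto_0 tendsto_imp_filterlim_at_right[OF assms]] .

definition field_map :: "real \<Rightarrow> real \<Rightarrow> real" where
  "field_map z B = (\<integral>x. tanh (w x * z + B) * w x \<partial>M)"

lemma integrable_field_map_integrand: "integrable M (\<lambda>x. tanh (w x * z + B) * w x)"
proof (rule integrable_dominated[of _ _ "\<lambda>x. \<bar>w x\<bar>"])
  show "AE x in M. \<bar>tanh (w x * z + B) * w x\<bar> \<le> \<bar>w x\<bar>"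
    using abs_tanh_real_less_1 by (intro AE_I2) (simp add: abs_mult mult_left_le_one_le less_imp_le)
qed auto

lemma field_map_lipschitz:
  "\<bar>field_map z B - field_map z' B'\<bar> \<le> E2 * \<bar>z - z'\<bar> + E1 * \<bar>B - B'\<bar>"
proof -
  have "field_map z B - field_map z' B'
      = (\<integral>x. (tanh (w x * z + B) - tanh (w x * z' + B')) * w x \<partial>M)"
    unfolding field_map_def
    by (simp add: left_diff_distrib integrable_field_map_integrand
        flip: Bochner_Integration.integral_diff)
  also have "\<bar>\<dots>\<bar> \<le> (\<integral>x. (w x)^2 * \<bar>z - z'\<bar> + w x * \<bar>B - B'\<bar> \<partial>M)"
  proof (rule abs_integral_le_AE)
    show "integrable M (\<lambda>x. (w x)^2 * \<bar>z - z'\<bar> + w x * \<bar>B - B'\<bar>)"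
      using integrable_w_square by (intro Bochner_Integration.integrable_add) auto
    show "AE x in M. \<bar>(tanh (w x * z + B) - tanh (w x * z' + B')) * w x\<bar>
        \<le> (w x)^2 * \<bar>z - z'\<bar> + w x * \<bar>B - B'\<bar>"
      using w_nonneg
    proof eventually_elim
      case (elim x)
      have "\<bar>tanh (w x * z + B) - tanh (w x * z' + B')\<bar> \<le> \<bar>w x * (z - z') + (B - B')\<bar>"
        using abs_tanh_diff_le[of "w x * z + B" "w x * z' + B'"] by (simp add: algebra_simps)
      also have "\<dots> \<le> w x * \<bar>z - z'\<bar> + \<bar>B - B'\<bar>"
        using elim by (metis abs_mult abs_of_nonneg abs_triangle_ineq)
      finally have bound: "\<bar>tanh (w x * z + B) - tanh (w x * z' + B')\<bar> \<le> w x * \<bar>z - z'\<bar> + \<bar>B - B'\<bar>" .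
      have "\<bar>(tanh (w x * z + B) - tanh (w x * z' + B')) * w x\<bar>
          = \<bar>tanh (w x * z + B) - tanh (w x * z' + B')\<bar> * w x"
        using elim by (simp add: abs_mult)
      also have "\<dots> \<le> (w x * \<bar>z - z'\<bar> + \<bar>B - B'\<bar>) * w x"
        by (rule mult_right_mono[OF bound elim])
      finally show ?case by (simp add: power2_eq_square algebra_simps)
    qed
  qed auto
  also have "\<dots> = E2 * \<bar>z - z'\<bar> + E1 * \<bar>B - B'\<bar>"
    using integrable_w_square by (subst Bochner_Integration.integral_add) auto
  finally show ?thesis .
qed

lemma field_map_0: "field_map 0 B = tanh B * E1"
  unfolding field_map_def by simp

lemma field_map_le_mean: "field_map z B \<le> E1"
  unfolding field_map_def
  by (rule integral_mono_AE[OF integrable_field_map_integrand integrable_w])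
    (use w_nonneg in \<open>eventually_elim, metis mult.commute mult_left_le less_imp_le[OF tanh_real_lt_1]\<close>)

lemma isCont_field_map: "isCont (\<lambda>z. field_map z B) z"
proof -
  have "((\<lambda>y. field_map y B - field_map z B) \<longlongrightarrow> 0) (at z)"
  proof (rule Lim_null_comparison)
    show "\<forall>\<^sub>F y in at z. norm (field_map y B - field_map z B) \<le> E2 * \<bar>y - z\<bar>"
      using field_map_lipschitz[of y B z B for y] by (intro always_eventually) simp
    show "((\<lambda>y. E2 * \<bar>y - z\<bar>) \<longlongrightarrow> 0) (at z)"
      by (rule tendsto_eq_intros refl | simp)+
  qed
  then show ?thesis unfolding isCont_def by (simp add: LIM_zero_iff)
qed

lemma field_map_fixpoint_unique:
  assumes "z = field_map z B" "z' = field_map z' B"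
  shows "z = z'"
proof -
  have "\<bar>z - z'\<bar> \<le> E2 * \<bar>z - z'\<bar>" using field_map_lipschitz[of z B z' B] assms by simp
  then show ?thesis using second_moment_less_1 second_moment_nonneg
    by (metis abs_ge_zero eq_iff_diff_eq_0 mult_le_cancel_right1 not_le zero_less_abs_iff)
qed

lemma field_map_fixpoint_exists:
  assumes "0 < B"
  shows "\<exists>z>0. z = field_map z B"
proof -
  have "\<exists>z. 0 \<le> z \<and> z \<le> E1 \<and> field_map z B - z = 0"
  proof (rule IVT2)
    show "field_map E1 B - E1 \<le> 0" using field_map_le_mean[of E1 B] by simp
    show "0 \<le> field_map 0 B - 0" using field_map_0 assms mean_pos by simp
    show "\<forall>x. 0 \<le> x \<and> x \<le> E1 \<longrightarrow> isCont (\<lambda>z. field_map z B - z) x"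
      using isCont_field_map by (auto intro!: continuous_intros)
  qed (use mean_pos in simp)
  then obtain z where z: "0 \<le> z" "field_map z B = z" by auto
  moreover have "z \<noteq> 0" using z field_map_0[of B] assms mean_pos by auto
  ultimately show ?thesis by (intro exI[of _ z]) auto
qed

definition fixpoint :: "real \<Rightarrow> real" where
  "fixpoint B = (THE z. z > 0 \<and> z = field_map z B)"

lemma fixpoint_pos: "0 < B \<Longrightarrow> 0 < fixpoint B"
  and fixpoint_eq: "0 < B \<Longrightarrow> fixpoint B = field_map (fixpoint B) B"
proof -
  assume "0 < B"
  then have "\<exists>!z. z > 0 \<and> z = field_map z B"
    using field_map_fixpoint_exists field_map_fixpoint_unique by blast
  from theI'[OF this] show "0 < fixpoint B" "fixpoint B = field_map (fixpoint B) B"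
    unfolding fixpoint_def by auto
qed

lemma fixpoint_lipschitz:
  assumes "0 < B" "0 < B'"
  shows "\<bar>fixpoint B' - fixpoint B\<bar> * (1 - E2) \<le> E1 * \<bar>B' - B\<bar>"
  using field_map_lipschitz[of "fixpoint B'" B' "fixpoint B" B] fixpoint_eq[OF assms(1)]
    fixpoint_eq[OF assms(2)]
  by (simp add: algebra_simps)

lemma fixpoint_le: "0 < B \<Longrightarrow> fixpoint B \<le> E1 * B / (1 - E2)"
proof -
  assume "0 < B"
  then have "fixpoint B \<le> E2 * fixpoint B + E1 * B"
    using field_map_lipschitz[of "fixpoint B" B 0 0] fixpoint_eq[of B] fixpoint_pos[of B]
      field_map_0[of 0]
    by simp
  then show ?thesis using second_moment_less_1 by (simp add: field_simps)
qed

lemma integrable_tanh: "f \<in> borel_measurable M \<Longrightarrow> integrable M (\<lambda>x. tanh (f x :: real))"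
  by (rule integrable_dominated[where g = "\<lambda>_. 1"])
    (auto simp: less_imp_le[OF abs_tanh_real_less_1])

lemma integrable_power_sech2:
  assumes "k \<le> 2" "f \<in> borel_measurable M"
  shows "integrable M (\<lambda>x. w x ^ k * sech2 (f x))"
proof (rule integrable_dominated[OF _ integrable_w_plus_1_square])
  show "AE x in M. \<bar>w x ^ k * sech2 (f x)\<bar> \<le> (w x + 1)^2"
    using abs_power_le_w_plus_1_square[OF assms(1)]
    by eventually_elim
      (auto simp: abs_mult sech2_nonneg sech2_le_1 intro: order_trans[OF mult_left_le])
qed (use assms(2) in measurable)

definition magnetization :: "real \<Rightarrow> real" where
  "magnetization B = (\<integral>x. tanh (w x * fixpoint B + B) \<partial>M)"

definition sech2_moment :: "nat \<Rightarrow> real \<Rightarrow> real" where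
  "sech2_moment k B = (\<integral>x. w x ^ k * sech2 (w x * fixpoint B + B) \<partial>M)"

definition susceptibility :: "real \<Rightarrow> real" where
  "susceptibility B = sech2_moment 0 B + (sech2_moment 1 B)^2 / (1 - sech2_moment 2 B)"

lemma integral_linearization_error:
  assumes [measurable]: "c \<in> borel_measurable M"
    and c_bounds: "AE x in M. 0 \<le> c x \<and> c x \<le> w x + 1"
  shows "\<bar>\<integral>x. c x * (tanh (w x * z' + B') - tanh (w x * z + B)
            - sech2 (w x * z + B) * ((w x * z' + B') - (w x * z + B))) \<partial>M\<bar>
    \<le> 2 * (\<bar>z' - z\<bar> + \<bar>B' - B\<bar>) * lin_modulus (\<bar>z' - z\<bar> + \<bar>B' - B\<bar>)"
proof -
  define d where "d = \<bar>z' - z\<bar> + \<bar>B' - B\<bar>"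
  have d_nonneg: "0 \<le> d" by (simp add: d_def)
  have shift: "\<bar>(w x * z' + B') - (w x * z + B)\<bar> \<le> (w x + 1) * d" if "0 \<le> w x" for x
  proof -
    have "\<bar>(w x * z' + B') - (w x * z + B)\<bar> = \<bar>w x * (z' - z) + (B' - B)\<bar>"
      by (simp add: algebra_simps)
    also have "\<dots> \<le> w x * \<bar>z' - z\<bar> + \<bar>B' - B\<bar>"
      using that by (metis abs_mult abs_of_nonneg abs_triangle_ineq)
    also have "\<dots> \<le> (w x + 1) * d" using that by (simp add: d_def algebra_simps)
    finally show ?thesis .
  qed
  have "\<bar>\<integral>x. c x * (tanh (w x * z' + B') - tanh (w x * z + B)
            - sech2 (w x * z + B) * ((w x * z' + B') - (w x * z + B))) \<partial>M\<bar>
      \<le> (\<integral>x. 2 * d * ((w x + 1)^2 * min 1 ((w x + 1) * d)) \<partial>M)"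
  proof (rule abs_integral_le_AE)
    show "integrable M (\<lambda>x. 2 * d * ((w x + 1)^2 * min 1 ((w x + 1) * d)))"
      using integrable_lin_modulus_integrand[OF d_nonneg] by simp
    show "AE x in M. \<bar>c x * (tanh (w x * z' + B') - tanh (w x * z + B)
            - sech2 (w x * z + B) * ((w x * z' + B') - (w x * z + B)))\<bar>
        \<le> 2 * d * ((w x + 1)^2 * min 1 ((w x + 1) * d))"
      using c_bounds w_nonneg
    proof eventually_elim
      case (elim x)
      then show ?case
        using weighted_tanh_linearization_error[OF _ _ d_nonneg shift] by (simp add: abs_mult)
    qed
  qed measurable
  also have "\<dots> = 2 * d * lin_modulus d" by (simp add: lin_modulus_def)
  finally show ?thesis by (simp add: d_def)
qed

lemma fixpoint_increment:
  assumes "0 < B" "0 < B'"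
  defines "\<delta> \<equiv> \<bar>fixpoint B' - fixpoint B\<bar> + \<bar>B' - B\<bar>"
  shows "\<bar>(fixpoint B' - fixpoint B) * (1 - sech2_moment 2 B) - (B' - B) * sech2_moment 1 B\<bar>
    \<le> 2 * \<delta> * lin_modulus \<delta>"
proof -
  define z z' where "z = fixpoint B" and "z' = fixpoint B'"
  have "(z' - z) * (1 - sech2_moment 2 B) - (B' - B) * sech2_moment 1 B
      = field_map z' B' - field_map z B - ((z' - z) * sech2_moment 2 B + (B' - B) * sech2_moment 1 B)"
    using fixpoint_eq[OF assms(1)] fixpoint_eq[OF assms(2)] by (simp add: z_def z'_def algebra_simps)
  also have "\<dots> = (\<integral>x. tanh (w x * z' + B') * w x - tanh (w x * z + B) * w x
      - ((z' - z) * (w x ^ 2 * sech2 (w x * z + B)) + (B' - B) * (w x ^ 1 * sech2 (w x * z + B))) \<partial>M)"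
    using integrable_power_sech2[of 1 "\<lambda>x. w x * z + B"] integrable_power_sech2[of 2 "\<lambda>x. w x * z + B"]
    by (simp add: field_map_def sech2_moment_def z_def integrable_field_map_integrand)
  also have "\<dots> = (\<integral>x. w x * (tanh (w x * z' + B') - tanh (w x * z + B)
            - sech2 (w x * z + B) * ((w x * z' + B') - (w x * z + B))) \<partial>M)"
    by (rule Bochner_Integration.integral_cong) (simp_all add: power2_eq_square algebra_simps)
  finally show ?thesis
    using integral_linearization_error[of w z' B' z B] w_nonneg
    by (simp add: z_def z'_def \<delta>_def)
qed

lemma magnetization_increment:
  assumes "0 < B" "0 < B'"
  defines "\<delta> \<equiv> \<bar>fixpoint B' - fixpoint B\<bar> + \<bar>B' - B\<bar>"
  shows "\<bar>magnetization B' - magnetization B - sech2_moment 1 B * (fixpoint B' - fixpoint B)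
      - sech2_moment 0 B * (B' - B)\<bar> \<le> 2 * \<delta> * lin_modulus \<delta>"
proof -
  define z z' where "z = fixpoint B" and "z' = fixpoint B'"
  have "magnetization B' - magnetization B - sech2_moment 1 B * (z' - z) - sech2_moment 0 B * (B' - B)
      = magnetization B' - magnetization B - ((z' - z) * sech2_moment 1 B + (B' - B) * sech2_moment 0 B)"
    by (simp add: algebra_simps)
  also have "\<dots> = (\<integral>x. tanh (w x * z' + B') - tanh (w x * z + B)
      - ((z' - z) * (w x ^ 1 * sech2 (w x * z + B)) + (B' - B) * (w x ^ 0 * sech2 (w x * z + B))) \<partial>M)"
    using integrable_power_sech2[of 1 "\<lambda>x. w x * z + B"] integrable_power_sech2[of 0 "\<lambda>x. w x * z + B"]
    by (simp add: magnetization_def sech2_moment_def z_def z'_def integrable_tanh)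
  also have "\<dots> = (\<integral>x. 1 * (tanh (w x * z' + B') - tanh (w x * z + B)
            - sech2 (w x * z + B) * ((w x * z' + B') - (w x * z + B))) \<partial>M)"
    by (rule Bochner_Integration.integral_cong) (simp_all add: algebra_simps)
  finally show ?thesis
    using integral_linearization_error[of "\<lambda>_. 1" z' B' z B] w_nonneg
    by (simp add: z_def z'_def \<delta>_def)
qed

lemma sech2_moment_nonneg: "0 \<le> sech2_moment k B"
  unfolding sech2_moment_def
  by (rule integral_nonneg_AE) (use w_nonneg in \<open>auto simp: sech2_nonneg\<close>)

lemma sech2_moment_le: "k \<le> 2 \<Longrightarrow> sech2_moment k B \<le> (\<integral>x. w x ^ k \<partial>M)"
  unfolding sech2_moment_def
  by (rule integral_mono_AE[OF integrable_power_sech2 integrable_w_power])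
    (use w_nonneg in \<open>auto simp: sech2_le_1 mult_left_le\<close>)

definition lip_const :: real where
  "lip_const = E1 / (1 - E2) + 1"

lemma lip_const_ge_1: "1 \<le> lip_const"
  unfolding lip_const_def using mean_pos second_moment_less_1 by simp

lemma fixpoint_shift_le:
  assumes "0 < B" "0 < B'"
  shows "\<bar>fixpoint B' - fixpoint B\<bar> + \<bar>B' - B\<bar> \<le> lip_const * \<bar>B' - B\<bar>"
proof -
  have "\<bar>fixpoint B' - fixpoint B\<bar> \<le> E1 * \<bar>B' - B\<bar> / (1 - E2)"
    using fixpoint_lipschitz[OF assms] second_moment_less_1 by (simp add: field_simps)
  then show ?thesis by (simp add: lip_const_def field_simps)
qed

lemma fixpoint_plus_le: "0 < B \<Longrightarrow> fixpoint B + B \<le> lip_const * B"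
  using fixpoint_le[of B] by (simp add: lip_const_def algebra_simps)

lemma increment_error_le:
  assumes "0 < B" "0 < B + h"
  shows "2 * (\<bar>fixpoint (B + h) - fixpoint B\<bar> + \<bar>h\<bar>) * lin_modulus (\<bar>fixpoint (B + h) - fixpoint B\<bar> + \<bar>h\<bar>)
    \<le> 2 * lip_const * lin_modulus (lip_const * \<bar>h\<bar>) * \<bar>h\<bar>"
proof -
  have "2 * (\<bar>fixpoint (B + h) - fixpoint B\<bar> + \<bar>h\<bar>) * lin_modulus (\<bar>fixpoint (B + h) - fixpoint B\<bar> + \<bar>h\<bar>)
      \<le> 2 * (lip_const * \<bar>h\<bar>) * lin_modulus (lip_const * \<bar>h\<bar>)"
    using fixpoint_shift_le[OF assms] lip_const_ge_1
    by (intro mult_mono lin_modulus_mono lin_modulus_nonneg) auto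
  then show ?thesis by (simp add: algebra_simps)
qed

lemma difference_quotient_error:
  assumes B: "0 < B" and Bh: "0 < B + h" and h: "h \<noteq> 0"
  shows "\<bar>(magnetization (B + h) - magnetization B) / h - susceptibility B\<bar>
    \<le> 2 * lip_const^2 * lin_modulus (lip_const * \<bar>h\<bar>)"
proof -
  define D where "D = fixpoint (B + h) - fixpoint B"
  define a0 a1 q where "a0 = sech2_moment 0 B" and "a1 = sech2_moment 1 B"
    and "q = 1 - sech2_moment 2 B"
  define K where "K = 2 * lip_const * lin_modulus (lip_const * \<bar>h\<bar>)"
  have K_nonneg: "0 \<le> K"
    using lip_const_ge_1 by (simp add: K_def lin_modulus_nonneg)
  note error = increment_error_le[OF B Bh, folded D_def K_def]
  have fix_err: "\<bar>D * q - h * a1\<bar> \<le> K * \<bar>h\<bar>"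
    using fixpoint_increment[OF B Bh] error by (simp add: D_def q_def a1_def)
  have magn_err: "\<bar>magnetization (B + h) - magnetization B - a1 * D - a0 * h\<bar> \<le> K * \<bar>h\<bar>"
    using magnetization_increment[OF B Bh] error by (simp add: D_def a0_def a1_def)
  have q_ge: "1 - E2 \<le> q" using sech2_moment_le[of 2 B] by (simp add: q_def)
  have q_pos: "0 < q" using q_ge second_moment_less_1 by simp
  have a1_bounds: "0 \<le> a1" "a1 \<le> E1"
    using sech2_moment_nonneg[of 1 B] sech2_moment_le[of 1 B] by (auto simp: a1_def)
  have split: "(magnetization (B + h) - magnetization B) / h - susceptibility B
      = (magnetization (B + h) - magnetization B - a1 * D - a0 * h) / h
        + a1 * ((D * q - h * a1) / (h * q))"
    using h q_pos by (simp add: susceptibility_def a0_def a1_def q_def power2_eq_square field_simps)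
  have term1: "\<bar>(magnetization (B + h) - magnetization B - a1 * D - a0 * h) / h\<bar> \<le> K"
    using magn_err h by (simp add: abs_divide divide_le_eq)
  have "\<bar>(D * q - h * a1) / (h * q)\<bar> \<le> K / q"
    using fix_err h q_pos by (simp add: abs_divide abs_mult divide_le_eq field_simps)
  also have "\<dots> \<le> K / (1 - E2)"
    using q_ge second_moment_less_1 K_nonneg by (intro divide_left_mono) auto
  finally have "\<bar>a1 * ((D * q - h * a1) / (h * q))\<bar> \<le> E1 * (K / (1 - E2))"
    unfolding abs_mult using a1_bounds by (intro mult_mono) auto
  then have "\<bar>(magnetization (B + h) - magnetization B) / h - susceptibility B\<bar>
      \<le> K + E1 * (K / (1 - E2))"
    unfolding split using term1 by linarith
  also have "\<dots> = 2 * lip_const^2 * lin_modulus (lip_const * \<bar>h\<bar>)"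
    by (simp add: K_def lip_const_def power2_eq_square field_simps)
  finally show ?thesis .
qed

lemma magnetization_has_derivative:
  assumes "0 < B"
  shows "(magnetization has_real_derivative susceptibility B) (at B)"
proof -
  have "((\<lambda>h. lip_const * \<bar>h\<bar>) \<longlongrightarrow> 0) (at (0::real))"
    using tendsto_mult_right_zero[OF tendsto_rabs_zero[OF tendsto_ident_at]] by simp
  moreover have "\<forall>\<^sub>F h in at 0. 0 < lip_const * \<bar>h\<bar>"
    unfolding eventually_at_filter using lip_const_ge_1 by (intro always_eventually) simp
  ultimately have modulus: "((\<lambda>h. 2 * lip_const^2 * lin_modulus (lip_const * \<bar>h\<bar>)) \<longlongrightarrow> 0) (at 0)"
    by (rule tendsto_mult_right_zero[OF lin_modulus_tendsto_0_compose])
  have bound: "\<forall>\<^sub>F h in at 0. norm ((magnetization (B + h) - magnetization B) / h - susceptibility B)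
      \<le> 2 * lip_const^2 * lin_modulus (lip_const * \<bar>h\<bar>)"
    unfolding eventually_at
  proof (intro exI[of _ B] conjI ballI impI)
    fix h :: real assume h: "h \<noteq> 0 \<and> dist h 0 < B"
    then have "0 < B + h" by auto
    with h show "norm ((magnetization (B + h) - magnetization B) / h - susceptibility B)
        \<le> 2 * lip_const^2 * lin_modulus (lip_const * \<bar>h\<bar>)"
      using difference_quotient_error[OF assms \<open>0 < B + h\<close>] by simp
  qed (rule assms)
  have "((\<lambda>h. (magnetization (B + h) - magnetization B) / h - susceptibility B)
      \<longlongrightarrow> 0) (at 0)"
    by (rule Lim_null_comparison[OF bound modulus])
  then show ?thesis unfolding DERIV_def by (simp add: LIM_zero_iff)
qed

lemma sech2_moment_deviation:
  assumes "k \<le> 2" "0 < B"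
  shows "\<bar>sech2_moment k B - (\<integral>x. w x ^ k \<partial>M)\<bar> \<le> lin_modulus (lip_const * B)"
proof -
  define z where "z = fixpoint B"
  have "sech2_moment k B - (\<integral>x. w x ^ k \<partial>M)
      = (\<integral>x. w x ^ k * sech2 (w x * z + B) - w x ^ k \<partial>M)"
    using integrable_power_sech2[OF assms(1), of "\<lambda>x. w x * z + B"] integrable_w_power[OF assms(1)]
    by (simp add: sech2_moment_def z_def)
  also have "\<bar>\<dots>\<bar> \<le> lin_modulus (lip_const * B)"
    unfolding lin_modulus_def
  proof (rule abs_integral_le_AE[OF _ integrable_lin_modulus_integrand])
    show "AE x in M. \<bar>w x ^ k * sech2 (w x * z + B) - w x ^ k\<bar>
        \<le> (w x + 1)^2 * min 1 ((w x + 1) * (lip_const * B))"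
      using abs_power_le_w_plus_1_square[OF assms(1)] w_nonneg
    proof eventually_elim
      case (elim x)
      have u_nonneg: "0 \<le> w x * z + B"
        using elim fixpoint_pos[OF assms(2)] assms(2) by (simp add: z_def)
      have "\<bar>w x * z + B\<bar> \<le> (w x + 1) * (z + B)"
        using elim u_nonneg fixpoint_pos[OF assms(2)] assms(2) by (simp add: z_def algebra_simps)
      also have "\<dots> \<le> (w x + 1) * (lip_const * B)"
        using fixpoint_plus_le[OF assms(2)] elim by (intro mult_left_mono) (auto simp: z_def)
      finally have "min 1 \<bar>w x * z + B\<bar> \<le> min 1 ((w x + 1) * (lip_const * B))" by simp
      have "\<bar>w x ^ k * sech2 (w x * z + B) - w x ^ k\<bar> = w x ^ k * tanh (w x * z + B) ^ 2"
        using elim by (simp add: sech2_def algebra_simps)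
      also have "\<dots> \<le> (w x + 1)^2 * min 1 \<bar>w x * z + B\<bar>"
        using elim tanh_square_le by (intro mult_mono) auto
      also have "\<dots> \<le> (w x + 1)^2 * min 1 ((w x + 1) * (lip_const * B))"
        by (rule mult_left_mono) (fact, simp)
      finally show ?case .
    qed
  qed (use assms lip_const_ge_1 in auto)
  finally show ?thesis .
qed

lemma sech2_moment_tendsto:
  assumes "k \<le> 2"
  shows "((\<lambda>B. sech2_moment k B) \<longlongrightarrow> (\<integral>x. w x ^ k \<partial>M)) (at_right 0)"
proof -
  have "((\<lambda>B. lip_const * B) \<longlongrightarrow> 0) (at_right (0::real))"
    by (rule tendsto_mult_right_zero[OF tendsto_ident_at])
  moreover have "\<forall>\<^sub>F B in at_right 0. 0 < lip_const * B"
    unfolding eventually_at_right_field using lip_const_ge_1 by (intro exI[of _ 1]) simp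
  ultimately have modulus: "((\<lambda>B. lin_modulus (lip_const * B)) \<longlongrightarrow> 0) (at_right 0)"
    by (rule lin_modulus_tendsto_0_compose)
  have bound: "\<forall>\<^sub>F B in at_right 0.
      norm (sech2_moment k B - (\<integral>x. w x ^ k \<partial>M)) \<le> lin_modulus (lip_const * B)"
    unfolding eventually_at_right_field
    using sech2_moment_deviation[OF assms] by (intro exI[of _ 1]) simp
  have "((\<lambda>B. sech2_moment k B - (\<integral>x. w x ^ k \<partial>M)) \<longlongrightarrow> 0) (at_right 0)"
    by (rule Lim_null_comparison[OF bound modulus])
  then show ?thesis by (simp add: LIM_zero_iff)
qed

lemma susceptibility_tendsto: "(susceptibility \<longlongrightarrow> 1 + E1^2 / (1 - E2)) (at_right 0)"
proof -
  have "((\<lambda>B. sech2_moment 0 B + (sech2_moment 1 B)^2 / (1 - sech2_moment 2 B))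
      \<longlongrightarrow> (\<integral>x. w x ^ 0 \<partial>M) + (\<integral>x. w x ^ 1 \<partial>M)^2 / (1 - (\<integral>x. w x ^ 2 \<partial>M))) (at_right 0)"
    using second_moment_less_1 by (intro tendsto_intros sech2_moment_tendsto) auto
  then show ?thesis by (simp add: susceptibility_def[abs_def] prob_space)
qed

end

lemma critical_scaling_limit:
  fixes b c K :: real
  assumes "0 < c" "c * sinh b = 1"
  shows "((\<lambda>\<beta>. (1 + K * sinh \<beta> / (1 - c * sinh \<beta>)) * (b - \<beta>)) \<longlongrightarrow> K / c * tanh b) (at_left b)"
proof -
  define q where "q \<beta> = (sinh \<beta> - sinh b) / (\<beta> - b)" for \<beta>
  have "((\<lambda>\<beta>. sinh \<beta>) has_field_derivative cosh b * 1) (at b within {..<b})"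
    by (rule has_field_derivative_sinh[OF DERIV_ident])
  then have q_tendsto: "(q \<longlongrightarrow> cosh b) (at_left b)"
    unfolding has_field_derivative_iff q_def[abs_def] by simp
  have "((\<lambda>\<beta>. (b - \<beta>) + K * sinh \<beta> / (c * q \<beta>)) \<longlongrightarrow> (b - b) + K * sinh b / (c * cosh b))
      (at_left b)"
    using assms(1) by (intro tendsto_intros q_tendsto) (auto simp: cosh_real_pos[THEN less_imp_neq, symmetric])
  moreover have "\<forall>\<^sub>F \<beta> in at_left b. (b - \<beta>) + K * sinh \<beta> / (c * q \<beta>)
      = (1 + K * sinh \<beta> / (1 - c * sinh \<beta>)) * (b - \<beta>)"
    unfolding eventually_at_left_field
  proof (intro exI[of _ "b - 1"] conjI allI impI)
    fix \<beta> assume "b - 1 < \<beta>" and \<beta>: "\<beta> < b"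
    have "sinh \<beta> < sinh b" using \<beta> by simp
    then have gap: "1 - c * sinh \<beta> = c * (sinh b - sinh \<beta>)" "0 < sinh b - sinh \<beta>"
      using assms by (auto simp: algebra_simps)
    have "c * q \<beta> = (1 - c * sinh \<beta>) / (b - \<beta>)"
      using \<beta> by (simp add: q_def gap(1) field_simps)
    then have "K * sinh \<beta> / (c * q \<beta>) = K * sinh \<beta> / (1 - c * sinh \<beta>) * (b - \<beta>)"
      by simp
    then show "(b - \<beta>) + K * sinh \<beta> / (c * q \<beta>) = (1 + K * sinh \<beta> / (1 - c * sinh \<beta>)) * (b - \<beta>)"
      by (simp add: algebra_simps)
  qed simp
  ultimately show ?thesis by (simp add: Lim_transform_eventually tanh_def)
qed

locale weight_law = prob_space M for M :: "'a measure" +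
  fixes W :: "'a \<Rightarrow> real"
  assumes borel_measurable_W [measurable]: "W \<in> borel_measurable M"
    and W_nonneg: "AE x in M. 0 \<le> W x"
    and integrable_W_square: "integrable M (\<lambda>x. (W x)^2)"
    and mean_W_pos: "0 < (\<integral>x. W x \<partial>M)"
begin

abbreviation "EW \<equiv> \<integral>x. W x \<partial>M"
abbreviation "EW2 \<equiv> \<integral>x. (W x)^2 \<partial>M"

lemma second_moment_W_pos: "0 < EW2"
proof (rule ccontr)
  assume "\<not> 0 < EW2"
  moreover have "0 \<le> EW2" by (rule integral_nonneg_AE) auto
  ultimately have "AE x in M. (W x)^2 = 0"
    using integral_nonneg_eq_0_iff_AE[OF integrable_W_square] by simp
  then have "EW = 0" by (intro integral_eq_zero_AE) simp
  then show False using mean_W_pos by simp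
qed

lemma sinh_beta_c: "sinh (beta_c M W) = EW / EW2"
  by (simp add: beta_c_def nu_def)

lemma beta_c_pos: "0 < beta_c M W"
  using mean_W_pos second_moment_W_pos by (simp add: beta_c_def nu_def)

lemma alpha_square: "0 < \<beta> \<Longrightarrow> (alpha M W \<beta>)^2 = sinh \<beta> / EW"
  using mean_W_pos by (simp add: alpha_def)

lemma rescaled_weight_contractive:
  assumes "0 < \<beta>" "\<beta> < beta_c M W"
  shows "contractive_weight M (\<lambda>x. alpha M W \<beta> * W x)"
proof unfold_locales
  have alpha_pos: "0 < alpha M W \<beta>" using assms(1) mean_W_pos by (simp add: alpha_def)
  show "AE x in M. 0 \<le> alpha M W \<beta> * W x"
    using W_nonneg by eventually_elim (use alpha_pos in simp)
  show "integrable M (\<lambda>x. (alpha M W \<beta> * W x)^2)"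
    using integrable_W_square by (simp add: power_mult_distrib)
  show "0 < (\<integral>x. alpha M W \<beta> * W x \<partial>M)"
    using alpha_pos mean_W_pos by simp
  have "sinh \<beta> < EW / EW2" using assms sinh_beta_c by (metis sinh_real_less_iff)
  then have "sinh \<beta> * EW2 / EW < 1"
    using mean_W_pos second_moment_W_pos by (simp add: field_simps)
  then show "(\<integral>x. (alpha M W \<beta> * W x)^2 \<partial>M) < 1"
    using alpha_square[OF assms(1)] by (simp add: power_mult_distrib)
qed simp

lemma subcritical_susceptibility:
  assumes "0 < \<beta>" "\<beta> < beta_c M W"
  shows "(\<forall>B>0. Mtilde M W \<beta> differentiable at B)
    \<and> (chi M W \<beta> \<longlongrightarrow> 1 + EW * sinh \<beta> / (1 - EW2 / EW * sinh \<beta>)) (at_right 0)"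
proof -
  interpret contractive_weight M "\<lambda>x. alpha M W \<beta> * W x"
    by (rule rescaled_weight_contractive[OF assms])
  have Mtilde_eq: "Mtilde M W \<beta> = magnetization"
    by (rule ext) (simp add: Mtilde_def magnetization_def fixpoint_def field_map_def zstar_def)
  have chi_eq: "chi M W \<beta> B = susceptibility B" if "0 < B" for B
    unfolding chi_def Mtilde_eq
    by (rule DERIV_imp_deriv[OF magnetization_has_derivative[OF that]])
  have lim: "(chi M W \<beta> \<longlongrightarrow> 1 + E1^2 / (1 - E2)) (at_right 0)"
    using susceptibility_tendsto
    by (rule Lim_transform_eventually) (auto simp: eventually_at_right_field chi_eq intro!: exI[of _ 1])
  have "E1^2 = (alpha M W \<beta>)^2 * EW^2"
    by (simp add: power_mult_distrib)
  also have "\<dots> = EW * sinh \<beta>"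
    unfolding alpha_square[OF assms(1)] using mean_W_pos by (simp add: power2_eq_square)
  finally have E1_square: "E1^2 = EW * sinh \<beta>" .
  have E2_eq: "E2 = EW2 / EW * sinh \<beta>"
    by (simp add: power_mult_distrib alpha_square[OF assms(1)])
  show ?thesis
    unfolding Mtilde_eq
    using lim E1_square E2_eq magnetization_has_derivative real_differentiable_def by auto
qed

end

theorem mainTheorem4:
  fixes M :: "'a measure" and W :: "'a \<Rightarrow> real"
  assumes "prob_space M"
    and "W \<in> borel_measurable M"
    and "AE x in M. W x \<ge> 0"
    and "integrable M (\<lambda>x. (W x)^2)"
    and "(\<integral>x. W x \<partial>M) > 0"
  shows "(\<forall>\<^sub>F \<beta> in at_left (beta_c M W).
            (\<forall>B>0. (\<lambda>b. Mtilde M W \<beta> b) differentiable at B) \<and>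
            (\<exists>L. (chi M W \<beta> \<longlongrightarrow> L) (at_right 0)))
       \<and> ((\<lambda>\<beta>. chi0 M W \<beta> * (beta_c M W - \<beta>)) \<longlongrightarrow>
            (\<integral>x. W x \<partial>M)^2 / (\<integral>x. (W x)^2 \<partial>M) * tanh (beta_c M W))
           (at_left (beta_c M W))"
proof -
  interpret weight_law M W
    using assms by (simp add: weight_law_def weight_law_axioms_def)
  define L where "L \<beta> = 1 + EW * sinh \<beta> / (1 - EW2 / EW * sinh \<beta>)" for \<beta>
  have subcritical: "\<forall>\<^sub>F \<beta> in at_left (beta_c M W). 0 < \<beta> \<and> \<beta> < beta_c M W"
    unfolding eventually_at_left_field using beta_c_pos by (intro exI[of _ 0]) auto
  have susceptibility: "\<forall>\<^sub>F \<beta> in at_left (beta_c M W).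
      (\<forall>B>0. Mtilde M W \<beta> differentiable at B) \<and> (chi M W \<beta> \<longlongrightarrow> L \<beta>) (at_right 0)"
    using subcritical by (rule eventually_mono) (metis L_def subcritical_susceptibility)
  have "((\<lambda>\<beta>. L \<beta> * (beta_c M W - \<beta>)) \<longlongrightarrow> EW / (EW2 / EW) * tanh (beta_c M W))
      (at_left (beta_c M W))"
    unfolding L_def using mean_W_pos second_moment_W_pos sinh_beta_c
    by (intro critical_scaling_limit) auto
  moreover have "\<forall>\<^sub>F \<beta> in at_left (beta_c M W). L \<beta> * (beta_c M W - \<beta>) = chi0 M W \<beta> * (beta_c M W - \<beta>)"
    using susceptibility by (rule eventually_mono) (metis chi0_def tendsto_Lim trivial_limit_at_right_real)
  ultimately have "((\<lambda>\<beta>. chi0 M W \<beta> * (beta_c M W - \<beta>)) \<longlongrightarrow> EW / (EW2 / EW) * tanh (beta_c M W))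
      (at_left (beta_c M W))"
    by (rule Lim_transform_eventually)
  moreover have "EW / (EW2 / EW) = EW^2 / EW2" by (simp add: power2_eq_square)
  ultimately show ?thesis using susceptibility by (auto elim: eventually_mono)
qed

end
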